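(* Let $q$ be a prime number, let $l\ge 2$ be an integer and let $N=q^{l}$. Then $$\mathbb{Q}\text{-}\mathcal{KS}(N)=\Bigl(\bigcup_{s\in\mathbb{Z}\setminus\{0\}}\Bigl\{\,q+\frac{d}{s}\;:\; d \text{ a positive integer with } d\mid (q^{l}-q)\Bigr\}\Bigr)\setminus\{0,N\}.$$
   Context: Every nonzero rational $\alpha$ is written $\alpha=\alpha_1/\alpha_2$ with $\alpha_1\in\mathbb{Z}$, $\alpha_2$ a positive integer and $\gcd(\alpha_1,\alpha_2)=1$. For an integer $N\ge 2$ and a nonzero rational $\alpha=\alpha_1/\alpha_2$, $N$ is called an $\alpha$-Korselt number if $N\neq\alpha$ and $\alpha_2p-\alpha_1$ divides $\alpha_2N-\alpha_1$ (in $\mathbb{Z}$) for every prime divisor $p$ of $N$. For a subset $\mathbb{A}\subseteq\mathbb{Q}$, the Korselt set $\mathbb{A}\text{-}\mathcal{KS}(N)$ is the set of all $\beta\in\mathbb{A}\setminus\{0,N\}$ such that $N$ is a $\beta$-Korselt number. Here $a\mid b$ means $b=ac$ for some integer $c$. *)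

theory Defs
  imports Complex_Main "HOL-Computational_Algebra.Primes"
begin

definition korselt :: "rat \<Rightarrow> nat \<Rightarrow> bool" where
  "korselt \<alpha> N \<longleftrightarrow> \<alpha> \<noteq> 0 \<and> of_nat N \<noteq> \<alpha> \<and>
     (let (a1, a2) = quotient_of \<alpha> in
       \<forall>p. prime p \<and> p dvd N \<longrightarrow> (a2 * int p - a1) dvd (a2 * int N - a1))"

definition korselt_set :: "rat set \<Rightarrow> nat \<Rightarrow> rat set" where
  "korselt_set A N = {\<beta> \<in> A - {0, of_nat N}. korselt \<beta> N}"

end

theory Submission
  imports Defs
begin

text \<open>Write \<open>\<alpha> = a\<^sub>1/a\<^sub>2\<close> in lowest terms. Since \<open>N = q\<^sup>l\<close> has the single prime divisor \<open>q\<close>, and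
  \<open>a\<^sub>2N - a\<^sub>1 = (a\<^sub>2q - a\<^sub>1) + a\<^sub>2(N - q)\<close> with \<open>a\<^sub>2q - a\<^sub>1\<close> coprime to \<open>a\<^sub>2\<close>, the Korselt condition
  says exactly that \<open>m = a\<^sub>2q - a\<^sub>1\<close> divides \<open>q\<^sup>l - q\<close>. On the other hand \<open>\<alpha> - q = -m/a\<^sub>2\<close> is in
  lowest terms, so \<open>\<alpha> = q + d/s\<close> with \<open>d\<close> a positive divisor of \<open>q\<^sup>l - q\<close> is possible iff \<open>m\<close>
  divides such a \<open>d\<close>, i.e. iff \<open>m\<close> divides \<open>q\<^sup>l - q\<close>.\<close>

lemma coprime_mult_diff_left:
  fixes a b x :: "'a :: {algebraic_semidom, comm_ring_1}"
  assumes "coprime a b"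
  shows "coprime (b * x - a) b"
proof (rule coprimeI)
  fix c assume c_diff: "c dvd b * x - a" and c_b: "c dvd b"
  from c_b have "c dvd b * x" by simp
  from this c_diff have "c dvd b * x - (b * x - a)" by (rule dvd_diff)
  also have "b * x - (b * x - a) = a" by (simp add: algebra_simps)
  finally have "c dvd a" .
  with c_b assms show "is_unit c" by (meson coprime_common_divisor)
qed

lemma korselt_dvd_iff:
  fixes a1 a2 p N :: int
  assumes "coprime a1 a2"
  shows "(a2 * p - a1) dvd (a2 * N - a1) \<longleftrightarrow> (a2 * p - a1) dvd (N - p)"
proof -
  have "a2 * N - a1 = (a2 * p - a1) + a2 * (N - p)"
    by (simp add: algebra_simps)
  then have "(a2 * p - a1) dvd (a2 * N - a1) \<longleftrightarrow> (a2 * p - a1) dvd a2 * (N - p)"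
    by (metis dvd_add_right_iff dvd_refl)
  also have "\<dots> \<longleftrightarrow> (a2 * p - a1) dvd (N - p)"
    using coprime_mult_diff_left[OF assms] by (simp add: coprime_dvd_mult_right_iff)
  finally show ?thesis .
qed

lemma korselt_prime_power_iff:
  fixes q l :: nat
  assumes "prime q" and "l > 0" and "quotient_of \<alpha> = (a1, a2)"
  shows "korselt \<alpha> (q ^ l) \<longleftrightarrow>
    \<alpha> \<noteq> 0 \<and> of_nat (q ^ l) \<noteq> \<alpha> \<and> (a2 * int q - a1) dvd (int q ^ l - int q)"
proof -
  have prime_dvd_iff: "prime p \<and> p dvd q ^ l \<longleftrightarrow> p = q" for p
    using assms(1,2) by (metis dvd_power prime_dvd_power primes_dvd_imp_eq)
  show ?thesis
    unfolding korselt_def assms(3) Let_def prod.case prime_dvd_iff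
    using korselt_dvd_iff[OF quotient_of_coprime[OF assms(3)], of "int q" "int (q ^ l)"]
    by simp
qed

definition divisor_offsets :: "int \<Rightarrow> int \<Rightarrow> rat set" where
  "divisor_offsets q M = (\<Union>s\<in>{s. s \<noteq> 0}. {of_int q + of_int d / of_int s | d. d > 0 \<and> d dvd M})"

lemma mem_divisor_offsets_iff:
  fixes q M :: int
  assumes quot: "quotient_of \<alpha> = (a1, a2)" and "M \<noteq> 0"
  shows "\<alpha> \<in> divisor_offsets q M \<longleftrightarrow> (a2 * q - a1) dvd M" (is "_ \<longleftrightarrow> ?m dvd M")
proof -
  have a2_pos: "a2 > 0" using quotient_of_denom_pos[OF quot] .
  have offset: "\<alpha> - of_int q = - of_int ?m / of_int a2"
    using quotient_of_div[OF quot] a2_pos by (simp add: field_simps)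
  show ?thesis
  proof
    assume "\<alpha> \<in> divisor_offsets q M"
    then obtain s d where "s \<noteq> 0" "d dvd M" "\<alpha> = of_int q + of_int d / of_int s"
      unfolding divisor_offsets_def by blast
    with offset a2_pos have "of_int (- ?m * s) = (of_int (d * a2) :: rat)"
      by (simp add: field_simps)
    then have "?m dvd d * a2"
      by (metis dvd_triv_left dvd_minus_iff minus_mult_left of_int_eq_iff)
    then have "?m dvd d"
      using coprime_mult_diff_left[OF quotient_of_coprime[OF quot]]
      by (simp add: coprime_dvd_mult_left_iff)
    from this \<open>d dvd M\<close> show "?m dvd M" by (rule dvd_trans)
  next
    assume "?m dvd M"
    with assms(2) have "?m \<noteq> 0" by auto
    with a2_pos offset have "\<alpha> = of_int q + of_int \<bar>?m\<bar> / of_int (- a2 * sgn ?m)"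
      by (cases "?m > 0") (auto simp: field_simps)
    moreover have "- a2 * sgn ?m \<noteq> 0" "\<bar>?m\<bar> > 0" "\<bar>?m\<bar> dvd M"
      using \<open>?m \<noteq> 0\<close> a2_pos \<open>?m dvd M\<close> by (auto simp: sgn_0_0)
    ultimately show "\<alpha> \<in> divisor_offsets q M"
      unfolding divisor_offsets_def by blast
  qed
qed

theorem theorem3p1:
  fixes q l :: nat
  assumes "prime q" and "l \<ge> 2"
  shows "korselt_set UNIV (q ^ l) =
    (\<Union>s\<in>{s::int. s \<noteq> 0}.
       {of_nat q + of_int d / of_int s | d::int. d > 0 \<and> d dvd (int q ^ l - int q)})
    - {0, of_nat (q ^ l)}"
proof -
  have "int q ^ 1 < int q ^ l"
    using assms prime_gt_1_nat by (intro power_strict_increasing) auto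
  then have nonzero: "int q ^ l - int q \<noteq> 0" by simp
  have "korselt_set UNIV (q ^ l) = divisor_offsets (int q) (int q ^ l - int q) - {0, of_nat (q ^ l)}"
  proof (rule set_eqI)
    fix \<alpha> :: rat
    obtain a1 a2 where quot: "quotient_of \<alpha> = (a1, a2)" by fastforce
    show "\<alpha> \<in> korselt_set UNIV (q ^ l) \<longleftrightarrow>
        \<alpha> \<in> divisor_offsets (int q) (int q ^ l - int q) - {0, of_nat (q ^ l)}"
      using mem_divisor_offsets_iff[OF quot nonzero] korselt_prime_power_iff[OF assms(1) _ quot] assms(2)
      unfolding korselt_set_def by auto
  qed
  then show ?thesis by (simp add: divisor_offsets_def)
qed

end
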